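(* Suppose $\frac{\Delta_L}{\overline{\Delta}_L}\le\sqrt{n}$. Let $\epsilon\in(0,1)$ and $c\ge1$ a constant, and sample $n_b=\frac{c}{1-\epsilon}\Delta$ batches, each consisting of $B=(1-\epsilon)\frac{n}{\Delta}$ updates drawn uniformly at random with replacement from the $n$ updates. For the $i$-th batch let $G_u^i$ be the subgraph of $G_u$ induced by its sampled updates and $E_u^i$ its number of edges. Then the total number of edges $Z=\sum_{i=1}^{n_b}E_u^i$ is less than $O(E_u\log n)$ with probability $1-n^{-\Omega(\log n)}$.
   Context: $G_u$ is a bipartite graph whose left vertices are $n$ updates $u_1,\dots,u_n$ and whose right vertices are $d$ model variables, with $u_i$ adjacent to a variable iff the update reads or writes it; $E_u$ is its number of edges, $\Delta_L$ its maximum left degree and $\overline{\Delta}_L$ its average left degree. The conflict graph on the updates joins two updates iff they share a variable; $\Delta$ is its maximum degree. The induced subgraph of a batch consists of the sampled updates together with all their incident edges and adjacent variables. *)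

theory Defs
  imports "HOL-Probability.Probability"
begin

text \<open>The bipartite update graph G_u: updates are 0..<n, variables are natural numbers;
  update i is adjacent exactly to the variables in the set Nb i.\<close>

definition E_u :: "nat \<Rightarrow> (nat \<Rightarrow> nat set) \<Rightarrow> nat" where
  "E_u n Nb = (\<Sum>i<n. card (Nb i))"

definition max_left_deg :: "nat \<Rightarrow> (nat \<Rightarrow> nat set) \<Rightarrow> nat" where
  "max_left_deg n Nb = Max ((\<lambda>i. card (Nb i)) ` {..<n})"

definition avg_left_deg :: "nat \<Rightarrow> (nat \<Rightarrow> nat set) \<Rightarrow> real" where
  "avg_left_deg n Nb = real (E_u n Nb) / real n"

definition conflict_deg :: "nat \<Rightarrow> (nat \<Rightarrow> nat set) \<Rightarrow> nat \<Rightarrow> nat" where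
  "conflict_deg n Nb i = card {j\<in>{..<n}. j \<noteq> i \<and> Nb i \<inter> Nb j \<noteq> {}}"

definition max_conflict_deg :: "nat \<Rightarrow> (nat \<Rightarrow> nat set) \<Rightarrow> nat" where
  "max_conflict_deg n Nb = Max (conflict_deg n Nb ` {..<n})"

text \<open>A sample s assigns to slot (i,k) (batch i, draw k) an update index.
  The induced subgraph of batch i contains the set of sampled updates of batch i
  with all their incident edges; its edge count is:\<close>
definition batch_edges :: "(nat \<Rightarrow> nat set) \<Rightarrow> nat \<Rightarrow> (nat \<times> nat \<Rightarrow> nat) \<Rightarrow> nat \<Rightarrow> nat" where
  "batch_edges Nb B s i = (\<Sum>j\<in>(\<lambda>k. s (i, k)) ` {..<B}. card (Nb j))"

definition total_batch_edges :: "(nat \<Rightarrow> nat set) \<Rightarrow> nat \<Rightarrow> nat \<Rightarrow> (nat \<times> nat \<Rightarrow> nat) \<Rightarrow> nat" where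
  "total_batch_edges Nb nb B s = (\<Sum>i<nb. batch_edges Nb B s i)"

definition batch_sampling :: "nat \<Rightarrow> nat \<Rightarrow> nat \<Rightarrow> (nat \<times> nat \<Rightarrow> nat) pmf" where
  "batch_sampling n nb B = Pi_pmf ({..<nb} \<times> {..<B}) 0 (\<lambda>_. pmf_of_set {..<n})"

end

theory Submission
  imports Defs
begin

(* Counting every sampled slot separately (ignoring repetitions inside a batch) bounds Z by a
   sum of c n independent copies of the degree of a uniformly random update. This sum has mean
   c E_u and summands in [0, Delta_L], so by Hoeffding's inequality it exceeds 2 c E_u log n with
   probability at most exp (-2 (c E_u (2 log n - 1))^2 / (c n Delta_L^2)). The degree hypothesis
   says exactly n Delta_L^2 <= E_u^2, so the exponent is at least (log n)^2, i.e. the failure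
   probability is at most n^(-log n). *)

lemma Pi_pmf_Hoeffding_ineq_ge:
  fixes g :: "'b \<Rightarrow> real"
  assumes fin: "finite I" and ne: "I \<noteq> {}" and ab: "a < b"
    and range: "\<And>y. y \<in> set_pmf p \<Longrightarrow> g y \<in> {a..b}" and t: "t \<ge> 0"
  shows "measure_pmf.prob (Pi_pmf I d (\<lambda>_. p))
           {s. (\<Sum>i\<in>I. g (s i)) \<ge> real (card I) * measure_pmf.expectation p g + t}
         \<le> exp (-2 * t\<^sup>2 / (real (card I) * (b - a)\<^sup>2))"
proof -
  define P where "P = Pi_pmf I d (\<lambda>_. p)"
  have component: "map_pmf (\<lambda>s. s i) P = p" if "i \<in> I" for i
    using fin that by (simp add: P_def Pi_pmf_component)
  interpret Hoeffding_ineq "measure_pmf P" I "\<lambda>i s. g (s i)" "\<lambda>_. a" "\<lambda>_. b"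
     "real (card I) * measure_pmf.expectation p g"
  proof unfold_locales
    show "prob_space.indep_vars (measure_pmf P) (\<lambda>_. borel) (\<lambda>i s. g (s i)) I"
      unfolding P_def
      by (intro prob_space.indep_vars_compose2[OF _ indep_vars_Pi_pmf[OF fin]])
         (auto simp: measure_pmf.prob_space_axioms)
    show "AE s in measure_pmf P. g (s i) \<in> {a..b}" if "i \<in> I" for i
      using range component[OF that] by (auto simp: AE_measure_pmf_iff)
    have "measure_pmf.expectation P (\<lambda>s. g (s i)) = measure_pmf.expectation p g" if "i \<in> I" for i
      using component[OF that] by (metis integral_map_pmf)
    then show "real (card I) * measure_pmf.expectation p g
          \<equiv> (\<Sum>i\<in>I. measure_pmf.expectation P (\<lambda>s. g (s i)))"
      by simp
  qed (fact fin)
  have "(\<Sum>i\<in>I. (b - a)\<^sup>2) > 0"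
    using ab fin ne by (intro sum_pos) auto
  from Hoeffding_ineq_ge[OF t this] show ?thesis
    by (simp add: P_def)
qed

lemma prob_le_ge_1_minus_prob_ge:
  fixes p :: "'a pmf" and f :: "'a \<Rightarrow> real"
  shows "1 - measure_pmf.prob p {s. f s \<ge> x} \<le> measure_pmf.prob p {s. f s \<le> x}"
proof -
  have "measure_pmf.prob p {s. f s \<le> x} = 1 - measure_pmf.prob p {s. f s > x}"
    using measure_pmf.prob_compl[of "{s. f s > x}" p]
    by (simp add: Compl_eq_Diff_UNIV[symmetric] Collect_neg_eq[symmetric] not_less)
  moreover have "measure_pmf.prob p {s. f s > x} \<le> measure_pmf.prob p {s. f s \<ge> x}"
    by (intro measure_pmf.finite_measure_mono) auto
  ultimately show ?thesis by simp
qed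

lemma ln_ge_1_of_ge_3: "3 \<le> n \<Longrightarrow> 1 \<le> ln (real n)"
  using exp_le by (subst ln_ge_iff) auto

lemma log_sq_le_Hoeffding_exponent:
  fixes c E L M :: real
  assumes c: "1 \<le> c" and L: "1 \<le> L" and E: "0 \<le> E" and M: "0 < M" "M \<le> c * E\<^sup>2"
  shows "L\<^sup>2 \<le> 2 * (c * E * (2 * L - 1))\<^sup>2 / M"
proof -
  have "L\<^sup>2 * M \<le> L\<^sup>2 * (c * E\<^sup>2)"
    using M by (intro mult_left_mono) auto
  also have "\<dots> \<le> c * (L\<^sup>2 * (c * E\<^sup>2))"
    using c mult_right_mono[of 1 c "L\<^sup>2 * (c * E\<^sup>2)"] by simp
  also have "\<dots> = (c * E * L)\<^sup>2"
    by (simp add: power2_eq_square algebra_simps)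
  also have "\<dots> \<le> (c * E * (2 * L - 1))\<^sup>2"
    using c L E by (intro power_mono mult_left_mono) auto
  also have "\<dots> \<le> 2 * (c * E * (2 * L - 1))\<^sup>2"
    by simp
  finally show ?thesis
    using M by (simp add: pos_le_divide_eq)
qed

lemma card_le_max_left_deg: "j < n \<Longrightarrow> card (Nb j) \<le> max_left_deg n Nb"
  unfolding max_left_deg_def by (intro Max_ge) auto

lemma max_left_deg_le_E_u:
  assumes "n > 0"
  shows "max_left_deg n Nb \<le> E_u n Nb"
proof -
  have "max_left_deg n Nb \<in> (\<lambda>i. card (Nb i)) ` {..<n}"
    unfolding max_left_deg_def using assms by (intro Max_in) (auto simp: lessThan_empty_iff)
  then obtain j where "j < n" "max_left_deg n Nb = card (Nb j)"
    by auto
  then show ?thesis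
    unfolding E_u_def by (metis finite_lessThan lessThan_iff member_le_sum zero_le)
qed

lemma E_u_le_mult_max_left_deg: "E_u n Nb \<le> n * max_left_deg n Nb"
  unfolding E_u_def using sum_bounded_above[of "{..<n}" "\<lambda>j. card (Nb j)"] card_le_max_left_deg
  by fastforce

lemma sq_max_left_deg_le:
  assumes n: "n > 0" and ratio: "real (max_left_deg n Nb) / avg_left_deg n Nb \<le> sqrt (real n)"
  shows "real n * (real (max_left_deg n Nb))\<^sup>2 \<le> (real (E_u n Nb))\<^sup>2"
proof (cases "E_u n Nb = 0")
  case True
  then show ?thesis
    using max_left_deg_le_E_u[OF n, of Nb] by simp
next
  case False
  then have "real (max_left_deg n Nb) \<le> sqrt (real n) * (real (E_u n Nb) / real n)"
    using ratio n by (simp add: avg_left_deg_def field_simps)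
  then have "(real (max_left_deg n Nb))\<^sup>2 \<le> (sqrt (real n) * (real (E_u n Nb) / real n))\<^sup>2"
    by (intro power_mono) auto
  also have "\<dots> = (real (E_u n Nb))\<^sup>2 / real n"
    using n by (simp add: power_mult_distrib power_divide) (simp add: power2_eq_square)
  finally show ?thesis
    using n by (simp add: field_simps)
qed

lemma total_batch_edges_le_sum_slots:
  "real (total_batch_edges Nb nb B s) \<le> (\<Sum>x\<in>{..<nb}\<times>{..<B}. real (card (Nb (s x))))"
proof -
  have "batch_edges Nb B s i \<le> (\<Sum>k<B. card (Nb (s (i, k))))" for i
    unfolding batch_edges_def
    using sum_image_le[of "{..<B}" "\<lambda>j. card (Nb j)" "\<lambda>k. s (i, k)"] by (simp add: o_def)
  then have "total_batch_edges Nb nb B s \<le> (\<Sum>i<nb. \<Sum>k<B. card (Nb (s (i, k))))"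
    unfolding total_batch_edges_def by (intro sum_mono)
  also have "\<dots> = (\<Sum>x\<in>{..<nb}\<times>{..<B}. card (Nb (s x)))"
    by (simp add: sum.cartesian_product)
  finally show ?thesis
    by (metis of_nat_le_iff of_nat_sum)
qed

lemma set_pmf_batch_sampling_less:
  assumes "n > 0" "s \<in> set_pmf (batch_sampling n nb B)" "i < nb" "k < B"
  shows "s (i, k) < n"
  using assms unfolding batch_sampling_def
  by (auto simp: set_Pi_pmf PiE_dflt_def lessThan_empty_iff)

lemma total_batch_edges_eq_0_if_E_u_eq_0:
  assumes "n > 0" "s \<in> set_pmf (batch_sampling n nb B)" "E_u n Nb = 0"
  shows "total_batch_edges Nb nb B s = 0"
  using assms set_pmf_batch_sampling_less[OF assms(1,2)]
  by (auto simp: total_batch_edges_def batch_edges_def E_u_def)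

lemma prob_total_batch_edges_ge:
  fixes nb B :: nat
  assumes n: "n > 0" and t: "t \<ge> 0"
  defines "m \<equiv> real nb * real B"
  shows "measure_pmf.prob (batch_sampling n nb B)
           {s. real (total_batch_edges Nb nb B s) \<ge> m * (real (E_u n Nb) / real n) + t}
         \<le> exp (-2 * t\<^sup>2 / (m * (real (max_left_deg n Nb))\<^sup>2))"
proof (cases "m * (real (max_left_deg n Nb))\<^sup>2 = 0")
  case True
  \<comment> \<open>the exponent is then a division by zero, which is 0\<close>
  then have "exp (-2 * t\<^sup>2 / (m * (real (max_left_deg n Nb))\<^sup>2)) = 1"
    by simp
  then show ?thesis
    by (simp only: measure_pmf.prob_le_1)
next
  case False
  define I where "I = {..<nb} \<times> {..<B}"
  define g where "g j = real (card (Nb j))" for j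
  have cardI: "real (card I) = m" and "I \<noteq> {}"
    using False by (auto simp: I_def m_def)
  have "measure_pmf.expectation (pmf_of_set {..<n}) g = real (E_u n Nb) / real n"
    using n by (subst integral_pmf_of_set) (auto simp: g_def E_u_def)
  moreover have "g y \<in> {0..real (max_left_deg n Nb)}" if "y \<in> set_pmf (pmf_of_set {..<n})" for y
    using that n card_le_max_left_deg[of y n Nb] by (auto simp: g_def lessThan_empty_iff)
  ultimately have "measure_pmf.prob (batch_sampling n nb B)
           {s. (\<Sum>x\<in>I. g (s x)) \<ge> m * (real (E_u n Nb) / real n) + t}
         \<le> exp (-2 * t\<^sup>2 / (m * (real (max_left_deg n Nb) - 0)\<^sup>2))"
    using Pi_pmf_Hoeffding_ineq_ge[of I 0 "real (max_left_deg n Nb)" "pmf_of_set {..<n}" g t 0]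
      \<open>I \<noteq> {}\<close> False t
    by (simp add: I_def batch_sampling_def cardI m_def)
  moreover have "measure_pmf.prob (batch_sampling n nb B)
           {s. real (total_batch_edges Nb nb B s) \<ge> m * (real (E_u n Nb) / real n) + t}
         \<le> measure_pmf.prob (batch_sampling n nb B)
           {s. (\<Sum>x\<in>I. g (s x)) \<ge> m * (real (E_u n Nb) / real n) + t}"
    using total_batch_edges_le_sum_slots[of Nb nb B]
    by (intro measure_pmf.finite_measure_mono) (auto simp: I_def g_def intro: order_trans)
  ultimately show ?thesis by simp
qed

lemma prob_total_batch_edges_le_log:
  fixes nb B :: nat
  assumes n: "3 \<le> n" and c: "1 \<le> c" and slots: "real nb * real B = c * real n"
    and deg: "real n * (real (max_left_deg n Nb))\<^sup>2 \<le> (real (E_u n Nb))\<^sup>2"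
  shows "1 - real n powr (- ln (real n)) \<le> measure_pmf.prob (batch_sampling n nb B)
           {s. real (total_batch_edges Nb nb B s) \<le> 2 * c * real (E_u n Nb) * ln (real n)}"
proof (cases "E_u n Nb = 0")
  case True
  with n have "measure_pmf.prob (batch_sampling n nb B)
           {s. real (total_batch_edges Nb nb B s) \<le> 2 * c * real (E_u n Nb) * ln (real n)} = 1"
    by (subst measure_pmf.prob_eq_1)
       (auto simp: AE_measure_pmf_iff intro!: total_batch_edges_eq_0_if_E_u_eq_0[of n])
  then show ?thesis by simp
next
  case False
  define E L D where "E = real (E_u n Nb)" and "L = ln (real n)"
    and "D = real (max_left_deg n Nb)"
  define t where "t = c * E * (2 * L - 1)"
  have "1 \<le> L" "E > 0" "n > 0"
    using ln_ge_1_of_ge_3[OF n] False n by (auto simp: L_def E_def)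
  then have "D > 0"
    using E_u_le_mult_max_left_deg[of n Nb] by (auto simp: D_def E_def intro: gr0I)
  have "0 \<le> t"
    using \<open>1 \<le> L\<close> \<open>E > 0\<close> c by (simp add: t_def)
  have threshold: "real nb * real B * (E / real n) + t = 2 * c * E * L"
    using slots \<open>n > 0\<close> by (simp add: t_def algebra_simps)
  have "real nb * real B * D\<^sup>2 \<le> c * E\<^sup>2"
    using slots deg c by (simp add: D_def E_def mult.assoc mult_left_mono)
  then have exponent: "L\<^sup>2 \<le> 2 * t\<^sup>2 / (real nb * real B * D\<^sup>2)"
    unfolding t_def using slots c \<open>n > 0\<close> \<open>D > 0\<close> \<open>1 \<le> L\<close> \<open>E > 0\<close>
    by (intro log_sq_le_Hoeffding_exponent) auto
  have "measure_pmf.prob (batch_sampling n nb B)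
           {s. real (total_batch_edges Nb nb B s) \<ge> 2 * c * E * L}
        \<le> exp (-2 * t\<^sup>2 / (real nb * real B * D\<^sup>2))"
    using prob_total_batch_edges_ge[OF \<open>n > 0\<close> \<open>0 \<le> t\<close>, of nb B Nb]
    by (simp only: E_def[symmetric] D_def[symmetric] threshold)
  also have "\<dots> \<le> exp (- L\<^sup>2)"
    using exponent by simp
  also have "\<dots> = real n powr (- ln (real n))"
    using \<open>n > 0\<close> by (simp add: powr_def L_def power2_eq_square)
  finally show ?thesis
    using prob_le_ge_1_minus_prob_ge[where p = "batch_sampling n nb B"
        and f = "\<lambda>s. real (total_batch_edges Nb nb B s)" and x = "2 * c * E * L"]
    by (simp add: E_def L_def)
qed

theorem lemma3:
  fixes c :: real
  assumes "c \<ge> 1"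
  shows "\<exists>C>0. \<exists>\<kappa>>0. \<exists>N0::nat. \<forall>n\<ge>N0. \<forall>(V::nat set) (Nb::nat \<Rightarrow> nat set) (\<epsilon>::real) (nb::nat) (B::nat).
    finite V \<longrightarrow> (\<forall>i<n. Nb i \<subseteq> V) \<longrightarrow>
    0 < \<epsilon> \<longrightarrow> \<epsilon> < 1 \<longrightarrow>
    real (max_left_deg n Nb) / avg_left_deg n Nb \<le> sqrt (real n) \<longrightarrow>
    real nb = c / (1 - \<epsilon>) * real (max_conflict_deg n Nb) \<longrightarrow>
    real B = (1 - \<epsilon>) * real n / real (max_conflict_deg n Nb) \<longrightarrow>
    measure_pmf.prob (batch_sampling n nb B)
       {s. real (total_batch_edges Nb nb B s) \<le> C * real (E_u n Nb) * ln (real n)}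
      \<ge> 1 - real n powr (- \<kappa> * ln (real n))"
proof (rule exI[of _ "2 * c"], intro conjI exI[of _ "1::real"] exI[of _ 3] allI impI)
  fix n :: nat and V :: "nat set" and Nb :: "nat \<Rightarrow> nat set" and \<epsilon> :: real and nb B :: nat
  assume n: "3 \<le> n" and "\<epsilon> < 1"
    and ratio: "real (max_left_deg n Nb) / avg_left_deg n Nb \<le> sqrt (real n)"
    and nb_eq: "real nb = c / (1 - \<epsilon>) * real (max_conflict_deg n Nb)"
    and B_eq: "real B = (1 - \<epsilon>) * real n / real (max_conflict_deg n Nb)"
  show "1 - real n powr (- 1 * ln (real n)) \<le> measure_pmf.prob (batch_sampling n nb B)
          {s. real (total_batch_edges Nb nb B s) \<le> 2 * c * real (E_u n Nb) * ln (real n)}"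
  proof (cases "max_conflict_deg n Nb = 0")
    case True
    then have "nb = 0"
      using nb_eq by simp
    then show ?thesis
      using n assms by (simp add: total_batch_edges_def)
  next
    case False
    have "real nb * real B = (c / (1 - \<epsilon>) * real (max_conflict_deg n Nb))
        * ((1 - \<epsilon>) * real n / real (max_conflict_deg n Nb))"
      using nb_eq B_eq by simp
    also have "\<dots> = c * real n"
      using False \<open>\<epsilon> < 1\<close> by (simp add: field_simps)
    finally show ?thesis
      using prob_total_batch_edges_le_log[OF n assms _ sq_max_left_deg_le[OF _ ratio]] n by simp
  qed
qed (use assms in simp_all)

end
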